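(* Let $\Gamma=\{\gamma_t=\exp(tA):t\in\mathbb R\}\subset GL(3,\mathbb R)$ with nonzero $A=(a_{ij})\in\mathfrak{gl}(3,\mathbb R)$, acting on $\mathbb{RP}^2$ by projective transformations. Let $\infty_Y=(0:1:0)$, $\pi:\mathbb{RP}^2\setminus\{\infty_Y\}\to\mathbb{RP}^1$, $\pi(x:y:z)=(x:z)$, $S_0=\{\infty_Y\}$, $S=\{(\gamma,p):\gamma(p)=\infty_Y\}$, and $L_0=\{(x,y)\in\mathbb R^2:a_{32}x=a_{12}\}$ if $a_{32}\ne0$; $L_0=\mathbb{RP}^2\setminus\mathbb R^2$ (the line at infinity) if $a_{32}=0$ and $a_{12}\neq0$; $L_0=\mathbb{RP}^2$ if $a_{32}=a_{12}=0$. Let $L=\{(\gamma,p):\gamma(p)\in L_0\}$ and $K=L\cup S$. Then $\Pi:\Gamma\times\mathbb{RP}^2\to\mathbb{RP}^1$, $\Pi(\gamma,p)=\pi(\gamma(p))$, is defined on $(\Gamma\times\mathbb{RP}^2)\setminus S$ and is locally transversal on $(\Gamma\times\mathbb{RP}^2)\setminus K$.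
   Context: Homogeneous coordinates: $(x:y:z)$ with $z\ne0$ is the finite point $(x/z,y/z)\in\mathbb R^2$; points with $z=0$ form the line at infinity; matrices act on homogeneous coordinates as on vectors. Transversality (here $k=m=1$), in smooth local coordinates: for $\Pi(t,p)$ put $\Phi(t,v,w)=\frac{\Pi(t,v)-\Pi(t,w)}{|v-w|}$ for $v\ne w$; $\Pi$ is transversal on $\Lambda\times\Omega$ if there is $C>0$ such that for all $t$ and $v\ne w$: if $|\Phi(t,v,w)|\le C$ then $|\partial_t\Phi(t,v,w)|\ge C$. Locally transversal: the domain can be covered by open sets on each of which (in local coordinates of parameter space, domain and target) the restriction is transversal. *)

theory Defs
  imports "HOL-Analysis.Analysis"
begin

(* Matrices act on homogeneous coordinates (column vectors) via *v.
   Entry a_ij of A is  A $ i $ j  (row i, column j). *)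

definition matpow :: "real^3^3 \<Rightarrow> nat \<Rightarrow> real^3^3" where
  "matpow A n = ((\<lambda>M. A ** M) ^^ n) (mat 1)"

definition mexp :: "real \<Rightarrow> real^3^3 \<Rightarrow> real^3^3" where
  "mexp t A = (\<Sum>n. ((t ^ n) / fact n) *\<^sub>R matpow A n)"

(* gamma_t(p) on a homogeneous representative v of p *)
definition gam :: "real^3^3 \<Rightarrow> real \<Rightarrow> real^3 \<Rightarrow> real^3" where
  "gam A t v = mexp t A *v v"

definition proj_eq :: "real^3 \<Rightarrow> real^3 \<Rightarrow> bool" where
  "proj_eq v w \<longleftrightarrow> v \<noteq> 0 \<and> w \<noteq> 0 \<and> (\<exists>c. c \<noteq> 0 \<and> v = c *\<^sub>R w)"

definition infY :: "real^3" where
  "infY = vector [0, 1, 0]"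

definition in_L0 :: "real^3^3 \<Rightarrow> real^3 \<Rightarrow> bool" where
  "in_L0 A w \<longleftrightarrow>
     (if A$3$2 \<noteq> 0 then w$3 \<noteq> 0 \<and> A$3$2 * (w$1 / w$3) = A$1$2
      else if A$1$2 \<noteq> 0 then w$3 = 0
      else True)"

(* S, L, K as sets of (t, v): t parametrises gamma_t, v a nonzero homogeneous
   representative of p in RP^2 *)
definition setS :: "real^3^3 \<Rightarrow> (real \<times> (real^3)) set" where
  "setS A = {(t, v). v \<noteq> 0 \<and> proj_eq (gam A t v) infY}"

definition setL :: "real^3^3 \<Rightarrow> (real \<times> (real^3)) set" where
  "setL A = {(t, v). v \<noteq> 0 \<and> in_L0 A (gam A t v)}"

definition setK :: "real^3^3 \<Rightarrow> (real \<times> (real^3)) set" where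
  "setK A = setL A \<union> setS A"

definition chart_inv :: "nat \<Rightarrow> real^2 \<Rightarrow> real^3" where
  "chart_inv j u =
     (if j = 1 then vector [1, u$1, u$2]
      else if j = 2 then vector [u$1, 1, u$2]
      else vector [u$1, u$2, 1])"

definition chart_coord :: "nat \<Rightarrow> real^3 \<Rightarrow> real^2" where
  "chart_coord j v =
     (if j = 1 then vector [v$2 / v$1, v$3 / v$1]
      else if j = 2 then vector [v$1 / v$2, v$3 / v$2]
      else vector [v$1 / v$3, v$2 / v$3])"

definition chart_dom :: "nat \<Rightarrow> real^3 \<Rightarrow> bool" where
  "chart_dom j v \<longleftrightarrow>
     (if j = 1 then v$1 \<noteq> 0 else if j = 2 then v$2 \<noteq> 0 else v$3 \<noteq> 0)"

(* pi(x:y:z) = (x:z) in the standard affine charts of RP^1: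
   chart 1 on {z \<noteq> 0}: x/z;  chart 2 on {x \<noteq> 0}: z/x *)
definition tchart_dom :: "nat \<Rightarrow> real^3 \<Rightarrow> bool" where
  "tchart_dom k w \<longleftrightarrow> (if k = 1 then w$3 \<noteq> 0 else w$1 \<noteq> 0)"

definition tchart_pi :: "nat \<Rightarrow> real^3 \<Rightarrow> real" where
  "tchart_pi k w = (if k = 1 then w$1 / w$3 else w$3 / w$1)"

definition Pi_coord :: "real^3^3 \<Rightarrow> nat \<Rightarrow> nat \<Rightarrow> real \<Rightarrow> real^2 \<Rightarrow> real" where
  "Pi_coord A j k t u = tchart_pi k (gam A t (chart_inv j u))"

definition transversal :: "(real \<Rightarrow> real^2 \<Rightarrow> real) \<Rightarrow> real set \<Rightarrow> (real^2) set \<Rightarrow> bool" where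
  "transversal P Lam Om \<longleftrightarrow>
     (\<exists>C>0. \<forall>t\<in>Lam. \<forall>v\<in>Om. \<forall>w\<in>Om. v \<noteq> w \<longrightarrow>
        (let Phi = (\<lambda>s. (P s v - P s w) / norm (v - w)) in
          \<bar>Phi t\<bar> \<le> C \<longrightarrow>
          (\<exists>D. (Phi has_real_derivative D) (at t) \<and> \<bar>D\<bar> \<ge> C)))"

definition Pi_locally_transversal :: "real^3^3 \<Rightarrow> bool" where
  "Pi_locally_transversal A \<longleftrightarrow>
     (\<forall>t0 v0. v0 \<noteq> 0 \<and> (t0, v0) \<notin> setK A \<longrightarrow>
       (\<exists>Lam Om j k. j \<in> {1,2,3} \<and> k \<in> {1,2} \<and>
          open Lam \<and> t0 \<in> Lam \<and> open Om \<and>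
          chart_dom j v0 \<and> chart_coord j v0 \<in> Om \<and>
          (\<forall>t\<in>Lam. \<forall>u\<in>Om. (t, chart_inv j u) \<notin> setK A \<and>
                              tchart_dom k (gam A t (chart_inv j u))) \<and>
          transversal (Pi_coord A j k) Lam Om))"

end

theory Submission
  imports Defs
begin

text \<open>
  Fix charts: \<open>p\<close> has a representative \<open>x(u)\<close> affine in the chart coordinate \<open>u \<in> \<real>\<^sup>2\<close>,
  and \<open>\<pi>(w) = P(w)/Q(w)\<close> with \<open>(P, Q)\<close> two coordinates of \<open>w\<close>. Put \<open>w = exp(tA) x(u)\<close>.
  Since \<open>w' = A w\<close>, the \<open>t\<close>-derivative of \<open>\<Pi>\<close> is \<open>V(w) = (Q(w) P(A w) - P(w) Q(A w)) / Q(w)\<^sup>2\<close>.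
  Both \<open>\<Pi>\<close> and \<open>V\<close> are rational in \<open>u\<close>, so their increments between \<open>u\<close> and \<open>u'\<close> are
  \<open>g \<bullet> (u - u')\<close> and \<open>h \<bullet> (u - u')\<close> with divided-difference vectors \<open>g\<close>, \<open>h\<close> depending
  continuously on \<open>(t, u, u')\<close>. If \<open>g\<close> and \<open>h\<close> are linearly independent on the diagonal, then
  near it a small difference quotient of \<open>\<Pi>\<close> in a direction \<open>e\<close> forces a large difference quotient
  of \<open>V\<close>, which is its \<open>t\<close>-derivative: this is transversality. On the diagonal,
  \<open>det (g, h) = (a\<^sub>1\<^sub>2 w\<^sub>3 - a\<^sub>3\<^sub>2 w\<^sub>1) det (w, exp(tA) \<partial>\<^sub>1x, exp(tA) \<partial>\<^sub>2x) / Q(w)\<^sup>4\<close>;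
  the second determinant never vanishes, and the linear form \<open>a\<^sub>1\<^sub>2 w\<^sub>3 - a\<^sub>3\<^sub>2 w\<^sub>1\<close> vanishes
  exactly on \<open>K\<close>.
\<close>

section \<open>The matrix exponential\<close>

lemma matpow_0 [simp]: "matpow A 0 = mat 1"
  by (simp add: matpow_def)

lemma matpow_Suc: "matpow A (Suc n) = A ** matpow A n"
  by (simp add: matpow_def)

lemma matpow_Suc_right: "matpow A (Suc n) = matpow A n ** A"
  by (induction n) (simp_all add: matpow_Suc matrix_mul_assoc)

definition entry_norm :: "real^'n^'m \<Rightarrow> real" where
  "entry_norm A = (\<Sum>i\<in>UNIV. \<Sum>l\<in>UNIV. \<bar>A$i$l\<bar>)"

lemma row_sum_le_entry_norm: "(\<Sum>l\<in>UNIV. \<bar>A$i$l\<bar>) \<le> entry_norm A"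
  unfolding entry_norm_def
  by (rule member_le_sum[where f="\<lambda>i. \<Sum>l\<in>UNIV. \<bar>A$i$l\<bar>"]) (auto intro: sum_nonneg)

lemma matpow_entry_bound: "\<bar>matpow A n $ i $ l\<bar> \<le> entry_norm A ^ n"
proof (induction n arbitrary: i l)
  case 0
  then show ?case by (simp add: mat_def)
next
  case (Suc n)
  have "\<bar>matpow A (Suc n) $ i $ l\<bar> \<le> (\<Sum>m\<in>UNIV. \<bar>A$i$m\<bar> * \<bar>matpow A n $ m $ l\<bar>)"
    unfolding matpow_Suc matrix_matrix_mult_def by (simp add: sum_abs[THEN order_trans] abs_mult)
  also have "\<dots> \<le> (\<Sum>m\<in>UNIV. \<bar>A$i$m\<bar>) * entry_norm A ^ n"
    unfolding sum_distrib_right by (intro sum_mono mult_left_mono Suc.IH) simp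
  also have "\<dots> \<le> entry_norm A ^ Suc n"
    using row_sum_le_entry_norm[of A i] by (simp add: mult_right_mono entry_norm_def sum_nonneg)
  finally show ?case .
qed

lemma summable_mexp_entry: "summable (\<lambda>n. matpow A n $ i $ l / fact n * t ^ n)"
proof (rule summable_comparison_test')
  show "summable (\<lambda>n. (entry_norm A * \<bar>t\<bar>) ^ n / fact n)"
    using summable_exp[of "entry_norm A * \<bar>t\<bar>"] by (simp add: divide_inverse mult.commute)
  show "norm (matpow A n $ i $ l / fact n * t ^ n) \<le> (entry_norm A * \<bar>t\<bar>) ^ n / fact n" for n
    unfolding power_mult_distrib norm_mult norm_divide
    by (simp add: power_abs divide_right_mono mult_right_mono matpow_entry_bound)
qed

lemma sums_vecI:
  fixes f :: "nat \<Rightarrow> 'a::real_normed_vector^'n"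
  assumes "\<And>i. (\<lambda>n. f n $ i) sums (a $ i)"
  shows "f sums a"
  using assms unfolding sums_def by (intro vec_tendstoI) simp

lemma summable_vecI:
  fixes f :: "nat \<Rightarrow> 'a::real_normed_vector^'n"
  assumes "\<And>i. summable (\<lambda>n. f n $ i)"
  shows "summable f"
  using sums_vecI[of f "\<chi> i. suminf (\<lambda>n. f n $ i)"] assms
  by (auto simp: summable_def summable_sums)

lemma summable_mexp: "summable (\<lambda>n. (t ^ n / fact n) *\<^sub>R matpow A n)"
  by (intro summable_vecI) (use summable_mexp_entry in \<open>simp add: mult.commute\<close>)

lemma mexp_entry_sums: "(\<lambda>n. matpow A n $ i $ l / fact n * t ^ n) sums (mexp t A $ i $ l)"
proof -
  have "(\<lambda>n. ((t ^ n / fact n) *\<^sub>R matpow A n) $ i) sums (mexp t A $ i)"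
    unfolding mexp_def by (rule sums_vec_nth[OF summable_sums[OF summable_mexp]])
  from sums_vec_nth[OF this, of l] show ?thesis by (simp add: mult.commute)
qed

lemma sums_matpow_Suc_left:
  "(\<lambda>n. matpow A (Suc n) $ i $ l / fact n * t ^ n) sums ((A ** mexp t A) $ i $ l)"
proof -
  have "(\<lambda>n. \<Sum>m\<in>UNIV. A$i$m * (matpow A n $ m $ l / fact n * t ^ n))
          sums (\<Sum>m\<in>UNIV. A$i$m * mexp t A $ m $ l)"
    by (intro sums_sum sums_mult mexp_entry_sums)
  then show ?thesis
    by (simp add: matpow_Suc matrix_matrix_mult_def sum_distrib_left sum_divide_distrib mult_ac)
qed

lemma sums_matpow_Suc_right:
  "(\<lambda>n. matpow A (Suc n) $ i $ l / fact n * t ^ n) sums ((mexp t A ** A) $ i $ l)"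
proof -
  have "(\<lambda>n. \<Sum>m\<in>UNIV. (matpow A n $ i $ m / fact n * t ^ n) * A$m$l)
          sums (\<Sum>m\<in>UNIV. mexp t A $ i $ m * A$m$l)"
    by (intro sums_sum sums_mult2 mexp_entry_sums)
  then show ?thesis
    by (simp add: matpow_Suc_right matrix_matrix_mult_def sum_distrib_left sum_divide_distrib mult_ac)
qed

lemma mexp_commute: "A ** mexp t A = mexp t A ** A"
  using sums_unique2[OF sums_matpow_Suc_left sums_matpow_Suc_right] by (simp add: vec_eq_iff)

lemma mexp_zero [simp]: "mexp 0 A = mat 1"
  using sums_unique2[OF mexp_entry_sums[where t=0] powser_sums_zero] by (simp add: vec_eq_iff)

lemma mexp_entry_has_derivative:
  "((\<lambda>s. mexp s A $ i $ l) has_real_derivative (A ** mexp t A) $ i $ l) (at t)"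
proof -
  define c where "c n = matpow A n $ i $ l / fact n" for n
  have "((\<lambda>s. \<Sum>n. c n * s ^ n) has_real_derivative (\<Sum>n. diffs c n * t ^ n)) (at t)"
    unfolding c_def by (rule termdiffs_strong_converges_everywhere) (rule summable_mexp_entry)
  moreover have "(\<lambda>s. \<Sum>n. c n * s ^ n) = (\<lambda>s. mexp s A $ i $ l)"
    using mexp_entry_sums by (simp add: c_def sums_iff)
  moreover have "diffs c n * t ^ n = matpow A (Suc n) $ i $ l / fact n * t ^ n" for n
    by (simp add: c_def diffs_def fact_Suc del: of_nat_Suc)
  ultimately show ?thesis
    using sums_unique[OF sums_matpow_Suc_left] by simp
qed

lemma mexp_mult_mexp_uminus: "mexp t A ** mexp (-t) A = mat 1"
proof -
  have "(mexp t A ** mexp (-t) A) $ i $ l = mat 1 $ i $ l" for i l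
  proof -
    define f where "f s = (mexp s A ** mexp (-s) A) $ i $ l" for s
    have "(f has_real_derivative 0) (at s)" for s
    proof -
      have "((\<lambda>s. mexp (-s) A $ m $ l) has_real_derivative - (A ** mexp (-s) A) $ m $ l) (at s)" for m
        using DERIV_mirror[THEN iffD1, OF mexp_entry_has_derivative[of A m l "-s"]] by simp
      moreover have "f = (\<lambda>s. \<Sum>m\<in>UNIV. mexp s A $ i $ m * mexp (-s) A $ m $ l)"
        by (simp add: f_def matrix_matrix_mult_def fun_eq_iff)
      ultimately have "(f has_real_derivative (\<Sum>m\<in>UNIV. mexp s A $ i $ m * - (A ** mexp (-s) A) $ m $ l
                   + (A ** mexp s A) $ i $ m * mexp (-s) A $ m $ l)) (at s)"
        by (simp only:) (intro DERIV_sum DERIV_mult' mexp_entry_has_derivative)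
      moreover have "(\<Sum>m\<in>UNIV. mexp s A $ i $ m * - (A ** mexp (-s) A) $ m $ l
                   + (A ** mexp s A) $ i $ m * mexp (-s) A $ m $ l)
          = ((A ** mexp s A) ** mexp (-s) A - mexp s A ** (A ** mexp (-s) A)) $ i $ l"
        by (simp add: matrix_matrix_mult_def sum.distrib sum_subtractf algebra_simps)
      ultimately show ?thesis using mexp_commute[of A s] by (simp add: matrix_mul_assoc)
    qed
    then have "f t = f 0" by (blast intro: DERIV_isconst_all)
    then show ?thesis by (simp add: f_def)
  qed
  then show ?thesis by (simp add: vec_eq_iff)
qed

lemma invertible_mexp: "invertible (mexp t A)"
  unfolding invertible_def using mexp_mult_mexp_uminus[of t A] mexp_mult_mexp_uminus[of "-t" A] by auto

lemma det_mexp_nonzero: "det (mexp t A) \<noteq> 0"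
  using invertible_mexp invertible_det_nz by blast

lemma gam_nonzero: "v \<noteq> 0 \<Longrightarrow> gam A t v \<noteq> 0"
  using invertible_mexp[of t A] unfolding gam_def invertible_left_inverse matrix_left_invertible_ker
  by blast

lemma gam_has_derivative:
  "((\<lambda>s. gam A s v $ i) has_real_derivative (A *v gam A t v) $ i) (at t)"
proof -
  have "((\<lambda>s. \<Sum>l\<in>UNIV. mexp s A $ i $ l * v $ l) has_real_derivative
          (\<Sum>l\<in>UNIV. (A ** mexp t A) $ i $ l * v $ l)) (at t)"
    by (intro DERIV_sum DERIV_cmult_right[OF mexp_entry_has_derivative])
  moreover have "(A *v gam A t v) $ i = (\<Sum>l\<in>UNIV. (A ** mexp t A) $ i $ l * v $ l)"
    by (simp only: gam_def matrix_vector_mul_assoc) (simp add: matrix_vector_mult_def)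
  ultimately show ?thesis
    by (simp add: gam_def matrix_vector_mult_def)
qed

lemma isCont_vec_lambda [continuous_intros]:
  "(\<And>i. isCont (f i) z) \<Longrightarrow> isCont (\<lambda>x. \<chi> i. f i x) z"
  unfolding isCont_def by (rule tendsto_vec_lambda)

lemma isCont_mexp_entry [continuous_intros]:
  fixes f :: "'a::t2_space \<Rightarrow> real"
  shows "isCont f z \<Longrightarrow> isCont (\<lambda>x. mexp (f x) A $ i $ l) z"
  by (rule isCont_o2[where g="\<lambda>t. mexp t A $ i $ l"]) (auto intro: DERIV_isCont mexp_entry_has_derivative)

lemma isCont_gam [continuous_intros]:
  fixes f :: "'a::t2_space \<Rightarrow> real"
  shows "isCont f z \<Longrightarrow> isCont g z \<Longrightarrow> isCont (\<lambda>x. gam A (f x) (g x)) z"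
  unfolding gam_def matrix_vector_mult_def by (intro continuous_intros)

lemma isCont_matrix_vector_mult [continuous_intros]:
  fixes M :: "real^'n^'m"
  shows "isCont f z \<Longrightarrow> isCont (\<lambda>x. M *v f x) z"
  by (rule isCont_o2[OF _ matrix_vector_mult_linear_continuous_at])

lemma det_vector_matrix_vector_mult:
  fixes M :: "real^3^3"
  shows "det (vector [M *v x, M *v y, M *v z]) = det M * det (vector [x, y, z])"
  by (simp add: det_3 matrix_vector_mult_def sum_3 algebra_simps)

section \<open>The sets \<open>S\<close>, \<open>L\<close>, \<open>K\<close> and the affine charts\<close>

definition L0_form :: "real^3^3 \<Rightarrow> real^3 \<Rightarrow> real" where
  "L0_form A w = A$1$2 * w$3 - A$3$2 * w$1"

lemma proj_eq_infY_iff: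
  assumes "w \<noteq> 0"
  shows "proj_eq w infY \<longleftrightarrow> w$1 = 0 \<and> w$3 = 0"
proof
  assume "w$1 = 0 \<and> w$3 = 0"
  then have "w = w$2 *\<^sub>R infY" "infY \<noteq> 0"
    by (auto simp: infY_def vec_eq_iff forall_3)
  with assms show "proj_eq w infY"
    unfolding proj_eq_def by (metis scale_zero_left)
qed (auto simp: proj_eq_def infY_def)

lemma setS_iff:
  assumes "v \<noteq> 0"
  shows "(t, v) \<in> setS A \<longleftrightarrow> gam A t v $ 1 = 0 \<and> gam A t v $ 3 = 0"
  using assms gam_nonzero proj_eq_infY_iff by (simp add: setS_def)

lemma in_L0_iff_L0_form:
  assumes "w$1 \<noteq> 0 \<or> w$3 \<noteq> 0"
  shows "in_L0 A w \<longleftrightarrow> L0_form A w = 0"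
  using assms by (cases "w$3 = 0") (auto simp: in_L0_def L0_form_def field_simps)

lemma setK_iff:
  assumes "v \<noteq> 0"
  shows "(t, v) \<in> setK A \<longleftrightarrow> L0_form A (gam A t v) = 0"
proof (cases "gam A t v $ 1 = 0 \<and> gam A t v $ 3 = 0")
  case True
  then show ?thesis
    using assms setS_iff by (simp add: setK_def L0_form_def)
next
  case False
  then show ?thesis
    using assms by (auto simp: setK_def setL_def setS_iff in_L0_iff_L0_form)
qed

definition chart_dir :: "nat \<Rightarrow> 2 \<Rightarrow> real^3" where
  "chart_dir j i = chart_inv j (axis i 1) - chart_inv j 0"

lemma chart_inv_affine: "chart_inv j u = chart_inv j 0 + (\<Sum>i\<in>UNIV. u $ i *\<^sub>R chart_dir j i)"
  by (simp add: chart_dir_def chart_inv_def sum_2 axis_def vec_eq_iff forall_3)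

lemma isCont_chart_inv [continuous_intros]: "isCont g z \<Longrightarrow> isCont (\<lambda>x. chart_inv j (g x)) z"
  by (subst chart_inv_affine) (intro continuous_intros)

lemma det_chart_frame: "det (vector [chart_inv j u, chart_dir j 1, chart_dir j 2]) \<noteq> 0"
  by (simp add: chart_dir_def chart_inv_def axis_def det_3)

lemma chart_inv_nonzero: "chart_inv j u \<noteq> 0"
  by (simp add: chart_inv_def vec_eq_iff forall_3)

lemma chart_inv_chart_coord:
  assumes "chart_dom j v"
  shows "\<exists>c. c \<noteq> 0 \<and> chart_inv j (chart_coord j v) = c *\<^sub>R v"
proof -
  define c where "c = 1 / (if j = 1 then v$1 else if j = 2 then v$2 else v$3)"
  have "c \<noteq> 0 \<and> chart_inv j (chart_coord j v) = c *\<^sub>R v"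
    using assms by (auto simp: c_def chart_dom_def chart_inv_def chart_coord_def vec_eq_iff forall_3)
  then show ?thesis ..
qed

lemma exists_chart: "v \<noteq> 0 \<Longrightarrow> \<exists>j\<in>{1,2,3}. chart_dom j v"
  by (auto simp: chart_dom_def vec_eq_iff forall_3)

section \<open>The projection \<open>\<pi>\<close> in the charts of \<open>\<real>P\<^sup>1\<close>\<close>

definition tchart_num :: "nat \<Rightarrow> real^3 \<Rightarrow> real" where
  "tchart_num k w = (if k = 1 then w$1 else w$3)"

definition tchart_den :: "nat \<Rightarrow> real^3 \<Rightarrow> real" where
  "tchart_den k w = (if k = 1 then w$3 else w$1)"

lemma tchart_pi_eq: "tchart_pi k w = tchart_num k w / tchart_den k w"
  by (simp add: tchart_pi_def tchart_num_def tchart_den_def)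

lemma tchart_dom_iff: "tchart_dom k w \<longleftrightarrow> tchart_den k w \<noteq> 0"
  by (simp add: tchart_dom_def tchart_den_def)

lemma linear_tchart_num: "linear (tchart_num k)"
  by (rule linearI) (simp_all add: tchart_num_def)

lemma linear_tchart_den: "linear (tchart_den k)"
  by (rule linearI) (simp_all add: tchart_den_def)

definition wedge :: "nat \<Rightarrow> real^3 \<Rightarrow> real^3 \<Rightarrow> real" where
  "wedge k y z = tchart_den k y * tchart_num k z - tchart_num k y * tchart_den k z"

lemma bilinear_wedge: "bilinear (wedge k)"
  unfolding bilinear_def wedge_def
  by (auto intro!: linearI simp: linear_add[OF linear_tchart_num] linear_add[OF linear_tchart_den]
      linear_scale[OF linear_tchart_num] linear_scale[OF linear_tchart_den] algebra_simps)

lemma wedge_self [simp]: "wedge k y y = 0"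
  by (simp add: wedge_def)

definition pi_slope :: "nat \<Rightarrow> real^3 \<Rightarrow> real^3 \<Rightarrow> real^3 \<Rightarrow> real" where
  "pi_slope k y Y D = wedge k y D / (tchart_den k y * tchart_den k Y)"

lemma linear_pi_slope: "linear (pi_slope k y Y)"
  unfolding pi_slope_def
  by (rule linearI) (simp_all add: bilinear_radd[OF bilinear_wedge] bilinear_rmul[OF bilinear_wedge]
      add_divide_distrib)

lemma tchart_pi_diff:
  assumes "tchart_den k y \<noteq> 0" "tchart_den k Y \<noteq> 0"
  shows "tchart_pi k Y - tchart_pi k y = pi_slope k y Y (Y - y)"
proof -
  have "pi_slope k y Y (Y - y) = wedge k y Y / (tchart_den k y * tchart_den k Y)"
    by (simp add: pi_slope_def bilinear_rsub[OF bilinear_wedge])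
  with assms show ?thesis by (simp add: tchart_pi_eq wedge_def field_simps)
qed

definition pi_velocity :: "nat \<Rightarrow> real^3^3 \<Rightarrow> real^3 \<Rightarrow> real" where
  "pi_velocity k A y = wedge k y (A *v y) / tchart_den k y ^ 2"

text \<open>
  Expand \<open>wedge k Y (A *v Y)\<close> and \<open>tchart_den k Y ^ 2\<close> at \<open>Y = y + D\<close> and keep the terms of
  order two as \<open>D\<close> times a factor evaluated at \<open>Y\<close>: the result is linear in \<open>D\<close>, and at
  \<open>D = Y - y\<close> it is the increment of \<open>pi_velocity\<close> (lemma \<open>pi_velocity_diff\<close>).
\<close>

definition velocity_slope :: "nat \<Rightarrow> real^3^3 \<Rightarrow> real^3 \<Rightarrow> real^3 \<Rightarrow> real^3 \<Rightarrow> real" where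
  "velocity_slope k A y Y D =
     (tchart_den k y ^ 2 * (wedge k y (A *v D) + wedge k D (A *v y) + wedge k D (A *v (Y - y)))
      - wedge k y (A *v y) * (2 * tchart_den k y + tchart_den k (Y - y)) * tchart_den k D)
     / (tchart_den k y ^ 2 * tchart_den k Y ^ 2)"

lemma linear_velocity_slope: "linear (velocity_slope k A y Y)"
  unfolding velocity_slope_def
  by (rule linearI) (simp_all add: bilinear_radd[OF bilinear_wedge] bilinear_rmul[OF bilinear_wedge]
      bilinear_ladd[OF bilinear_wedge] bilinear_lmul[OF bilinear_wedge]
      linear_add[OF linear_tchart_den] linear_scale[OF linear_tchart_den]
      matrix_vector_right_distrib matrix_vector_mult_scaleR add_divide_distrib[symmetric] algebra_simps)

lemma velocity_slope_diagonal:
  assumes "tchart_den k y \<noteq> 0"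
  shows "velocity_slope k A y y D =
    (tchart_den k y * (wedge k y (A *v D) + wedge k D (A *v y)) - 2 * wedge k y (A *v y) * tchart_den k D)
    / tchart_den k y ^ 3"
  using assms
  by (simp add: velocity_slope_def bilinear_rzero[OF bilinear_wedge] linear_0[OF linear_tchart_den]
      field_simps power2_eq_square power3_eq_cube)

lemma slope_det:
  assumes "tchart_den k y \<noteq> 0"
  shows "pi_slope k y y D1 * velocity_slope k A y y D2 - pi_slope k y y D2 * velocity_slope k A y y D1
       = L0_form A y * det (vector [y, D1, D2]) / tchart_den k y ^ 4"
proof -
  define N where "N D = tchart_den k y * (wedge k y (A *v D) + wedge k D (A *v y))
    - 2 * wedge k y (A *v y) * tchart_den k D" for D
  have num: "wedge k y D1 * N D2 - wedge k y D2 * N D1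
      = tchart_den k y * L0_form A y * det (vector [y, D1, D2])"
    by (cases "k = 1") (auto simp: N_def wedge_def tchart_num_def tchart_den_def L0_form_def det_3
        matrix_vector_mult_def sum_3 algebra_simps)
  have "velocity_slope k A y y D = N D / tchart_den k y ^ 3" for D
    unfolding N_def by (rule velocity_slope_diagonal[OF assms])
  moreover have "pi_slope k y y D = wedge k y D / tchart_den k y ^ 2" for D
    by (simp add: pi_slope_def power2_eq_square)
  ultimately have "pi_slope k y y D1 * velocity_slope k A y y D2 - pi_slope k y y D2 * velocity_slope k A y y D1
      = (wedge k y D1 * N D2 - wedge k y D2 * N D1) / tchart_den k y ^ 5"
    using assms by (simp add: diff_divide_distrib)
  also have "\<dots> = L0_form A y * det (vector [y, D1, D2]) / tchart_den k y ^ 4"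
    unfolding num using assms by (simp add: eval_nat_numeral)
  finally show ?thesis .
qed

lemma pi_velocity_diff:
  assumes "tchart_den k y \<noteq> 0" "tchart_den k Y \<noteq> 0"
  shows "pi_velocity k A Y - pi_velocity k A y = velocity_slope k A y Y (Y - y)"
proof -
  define Z where "Z = Y - y"
  have Y: "Y = y + Z"
    by (simp add: Z_def)
  have "wedge k Y (A *v Y)
      = wedge k y (A *v y) + (wedge k y (A *v Z) + wedge k Z (A *v y) + wedge k Z (A *v Z))"
    unfolding Y by (simp add: matrix_vector_right_distrib bilinear_ladd[OF bilinear_wedge]
        bilinear_radd[OF bilinear_wedge])
  moreover have "tchart_den k Y = tchart_den k y + tchart_den k Z"
    unfolding Y by (rule linear_add[OF linear_tchart_den])
  ultimately show ?thesis
    using assms unfolding pi_velocity_def velocity_slope_def Z_def[symmetric]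
    by (simp add: field_simps) (simp add: algebra_simps power2_eq_square)
qed

lemma tchart_pi_gam_has_derivative:
  assumes "tchart_den k (gam A t v) \<noteq> 0"
  shows "((\<lambda>s. tchart_pi k (gam A s v)) has_real_derivative pi_velocity k A (gam A t v)) (at t)"
proof -
  have "((\<lambda>s. tchart_num k (gam A s v)) has_real_derivative tchart_num k (A *v gam A t v)) (at t)"
       "((\<lambda>s. tchart_den k (gam A s v)) has_real_derivative tchart_den k (A *v gam A t v)) (at t)"
    by (simp_all add: tchart_num_def tchart_den_def gam_has_derivative)
  from DERIV_divide[OF this assms] show ?thesis
    by (simp add: tchart_pi_eq pi_velocity_def wedge_def power2_eq_square mult.commute)
qed

lemma isCont_tchart_num [continuous_intros]: "isCont f z \<Longrightarrow> isCont (\<lambda>x. tchart_num k (f x)) z"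
  by (cases "k = 1") (simp_all add: tchart_num_def)

lemma isCont_tchart_den [continuous_intros]: "isCont f z \<Longrightarrow> isCont (\<lambda>x. tchart_den k (f x)) z"
  by (cases "k = 1") (simp_all add: tchart_den_def)

lemma isCont_L0_form [continuous_intros]: "isCont f z \<Longrightarrow> isCont (\<lambda>x. L0_form A (f x)) z"
  unfolding L0_form_def by (intro continuous_intros)

lemma isCont_wedge [continuous_intros]:
  "isCont f z \<Longrightarrow> isCont g z \<Longrightarrow> isCont (\<lambda>x. wedge k (f x) (g x)) z"
  unfolding wedge_def by (intro continuous_intros)

lemma isCont_pi_slope:
  assumes "isCont y z" "isCont Y z" "isCont D z" "tchart_den k (y z) \<noteq> 0" "tchart_den k (Y z) \<noteq> 0"
  shows "isCont (\<lambda>x. pi_slope k (y x) (Y x) (D x)) z"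
  unfolding pi_slope_def using assms by (intro continuous_intros) auto

lemma isCont_velocity_slope:
  assumes "isCont y z" "isCont Y z" "isCont D z" "tchart_den k (y z) \<noteq> 0" "tchart_den k (Y z) \<noteq> 0"
  shows "isCont (\<lambda>x. velocity_slope k A (y x) (Y x) (D x)) z"
  unfolding velocity_slope_def using assms by (intro continuous_intros) auto

section \<open>A transversality criterion\<close>

lemma dist_Pair_le: "dist (a, b) (c, d) \<le> dist a c + dist b d"
  using sqrt_sum_squares_le_sum_abs[of "dist a c" "dist b d"] by (simp add: dist_Pair_Pair)

lemma eventually_nhds_triple_ball:
  assumes "eventually P (nhds (t0, u0, u1))"
  obtains \<delta> where "\<delta> > 0"
    "\<And>t v w. t \<in> ball t0 \<delta> \<Longrightarrow> v \<in> ball u0 \<delta> \<Longrightarrow> w \<in> ball u1 \<delta> \<Longrightarrow> P (t, v, w)"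
proof -
  obtain e where e: "e > 0" "\<And>z. dist z (t0, u0, u1) < e \<Longrightarrow> P z"
    using assms unfolding eventually_nhds_metric by blast
  have "P (t, v, w)" if "t \<in> ball t0 (e/3)" "v \<in> ball u0 (e/3)" "w \<in> ball u1 (e/3)" for t v w
  proof (rule e(2))
    have "dist (t, v, w) (t0, u0, u1) \<le> dist t t0 + (dist v u0 + dist w u1)"
      using dist_Pair_le[of t "(v, w)"] dist_Pair_le[of v w] by (smt (verit))
    with that show "dist (t, v, w) (t0, u0, u1) < e"
      by (simp add: dist_commute)
  qed
  with e(1) show ?thesis
    using that[of "e/3"] by simp
qed

lemma nondegenerate_pair_lower_bound:
  fixes a b :: "real^2"
  assumes "a$1 * b$2 - a$2 * b$1 \<noteq> 0"
  obtains c where "c > 0" "\<And>e. norm e = 1 \<Longrightarrow> c \<le> \<bar>a \<bullet> e\<bar> + \<bar>b \<bullet> e\<bar>"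
proof -
  have cont: "continuous_on (sphere 0 1) (\<lambda>e. \<bar>a \<bullet> e\<bar> + \<bar>b \<bullet> e\<bar>)"
    by (intro continuous_intros)
  obtain e0 where e0: "e0 \<in> sphere 0 1" "\<And>e. e \<in> sphere 0 1 \<Longrightarrow> \<bar>a \<bullet> e0\<bar> + \<bar>b \<bullet> e0\<bar> \<le> \<bar>a \<bullet> e\<bar> + \<bar>b \<bullet> e\<bar>"
    using continuous_attains_inf[OF compact_sphere _ cont] by auto
  have "a \<bullet> e0 \<noteq> 0 \<or> b \<bullet> e0 \<noteq> 0"
  proof (rule ccontr)
    assume "\<not> ?thesis"
    moreover have "e0$1 * (a$1 * b$2 - a$2 * b$1) = b$2 * (a \<bullet> e0) - a$2 * (b \<bullet> e0)"
      "e0$2 * (a$1 * b$2 - a$2 * b$1) = a$1 * (b \<bullet> e0) - b$1 * (a \<bullet> e0)"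
      by (simp_all add: inner_vec_def sum_2 algebra_simps)
    ultimately have "e0$1 * (a$1 * b$2 - a$2 * b$1) = 0" "e0$2 * (a$1 * b$2 - a$2 * b$1) = 0"
      by simp_all
    with assms have "e0 = 0"
      by (simp add: vec_eq_iff forall_2)
    with e0(1) show False
      by simp
  qed
  then show ?thesis
    using that[of "\<bar>a \<bullet> e0\<bar> + \<bar>b \<bullet> e0\<bar>"] e0(2) by auto
qed

lemma eventually_nhds_nonzero:
  fixes f :: "'a::t2_space \<Rightarrow> 'b::t1_space"
  shows "isCont f z \<Longrightarrow> f z \<noteq> c \<Longrightarrow> \<forall>\<^sub>F x in nhds z. f x \<noteq> c"
  unfolding isCont_def tendsto_at_iff_tendsto_nhds by (rule tendsto_imp_eventually_ne)

lemma linear_sum_scaleR_eq_inner: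
  fixes f :: "'a::real_vector \<Rightarrow> real" and x :: "real^'n"
  assumes "linear f"
  shows "f (\<Sum>i\<in>UNIV. x $ i *\<^sub>R d i) = (\<chi> i. f (d i)) \<bullet> x"
  by (simp add: linear_sum[OF assms] linear_scale[OF assms] inner_vec_def mult.commute)

definition transversal_condition :: "(real \<Rightarrow> real^2 \<Rightarrow> real) \<Rightarrow> real \<Rightarrow> real \<Rightarrow> real^2 \<Rightarrow> real^2 \<Rightarrow> bool"
  where "transversal_condition F C t v w \<longleftrightarrow> v \<noteq> w \<longrightarrow>
    \<bar>(F t v - F t w) / norm (v - w)\<bar> \<le> C \<longrightarrow>
    (\<exists>D. ((\<lambda>s. (F s v - F s w) / norm (v - w)) has_real_derivative D) (at t) \<and> C \<le> \<bar>D\<bar>)"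

lemma transversal_iff_condition:
  "transversal F Lam Om \<longleftrightarrow> (\<exists>C>0. \<forall>t\<in>Lam. \<forall>v\<in>Om. \<forall>w\<in>Om. transversal_condition F C t v w)"
  by (simp add: transversal_def transversal_condition_def Let_def)

lemma inner_lower_bound_near:
  fixes e g g0 h h0 :: "'a::real_inner"
  assumes "norm e = 1" "c \<le> \<bar>g0 \<bullet> e\<bar> + \<bar>h0 \<bullet> e\<bar>" "dist g g0 < c/4" "dist h h0 < c/4" "\<bar>g \<bullet> e\<bar> \<le> c/4"
  shows "c/4 < \<bar>h \<bullet> e\<bar>"
proof -
  have "\<bar>(g - g0) \<bullet> e\<bar> < c/4" "\<bar>(h - h0) \<bullet> e\<bar> < c/4"
    using assms(1,3,4) Cauchy_Schwarz_ineq2[of "g - g0" e] Cauchy_Schwarz_ineq2[of "h - h0" e]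
    by (simp_all add: dist_norm)
  with assms(2,5) show ?thesis
    unfolding inner_diff_left by arith
qed

lemma eventually_transversal_condition:
  fixes F Ft :: "real \<Rightarrow> real^2 \<Rightarrow> real" and g h :: "real \<times> (real^2) \<times> (real^2) \<Rightarrow> real^2"
  assumes "isCont g z0" "isCont h z0"
    and nondeg: "g z0 $ 1 * h z0 $ 2 - g z0 $ 2 * h z0 $ 1 \<noteq> 0"
    and local: "\<forall>\<^sub>F (t, v, w) in nhds z0.
        F t v - F t w = g (t, v, w) \<bullet> (v - w) \<and> Ft t v - Ft t w = h (t, v, w) \<bullet> (v - w) \<and>
        ((\<lambda>s. F s v) has_real_derivative Ft t v) (at t) \<and> ((\<lambda>s. F s w) has_real_derivative Ft t w) (at t)"
  shows "\<exists>C>0. \<forall>\<^sub>F (t, v, w) in nhds z0. transversal_condition F C t v w"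
proof -
  obtain c where "c > 0" and c: "\<And>e. norm e = 1 \<Longrightarrow> c \<le> \<bar>g z0 \<bullet> e\<bar> + \<bar>h z0 \<bullet> e\<bar>"
    using nondegenerate_pair_lower_bound[OF nondeg] by blast
  have "\<forall>\<^sub>F z in nhds z0. dist (g z) (g z0) < c/4" "\<forall>\<^sub>F z in nhds z0. dist (h z) (h z0) < c/4"
    using assms(1,2) \<open>c > 0\<close> unfolding isCont_def tendsto_at_iff_tendsto_nhds
    by (intro tendstoD; simp)+
  with local have "\<forall>\<^sub>F (t, v, w) in nhds z0. transversal_condition F (c/4) t v w"
  proof eventually_elim
    case (elim z)
    obtain t v w where z: "z = (t, v, w)"
      by (cases z) auto
    from elim have eqs: "F t v - F t w = g z \<bullet> (v - w)" "Ft t v - Ft t w = h z \<bullet> (v - w)"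
      and ders: "((\<lambda>s. F s v) has_real_derivative Ft t v) (at t)" "((\<lambda>s. F s w) has_real_derivative Ft t w) (at t)"
      and near: "dist (g z) (g z0) < c/4" "dist (h z) (h z0) < c/4"
      by (simp_all add: z)
    show ?case
      unfolding z transversal_condition_def prod.case
    proof (intro impI)
      assume "v \<noteq> w" and small: "\<bar>(F t v - F t w) / norm (v - w)\<bar> \<le> c/4"
      define e where "e = (1 / norm (v - w)) *\<^sub>R (v - w)"
      have "norm e = 1"
        using \<open>v \<noteq> w\<close> by (simp add: e_def)
      moreover have "(F t v - F t w) / norm (v - w) = g z \<bullet> e"
        using eqs by (simp add: e_def divide_inverse mult.commute)
      ultimately have "c/4 < \<bar>h z \<bullet> e\<bar>"
        using inner_lower_bound_near[OF _ c near] small by simp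
      moreover have "((\<lambda>s. (F s v - F s w) / norm (v - w)) has_real_derivative h z \<bullet> e) (at t)"
        using DERIV_cdivide[OF DERIV_diff[OF ders], of "norm (v - w)"] eqs
        by (simp add: e_def divide_inverse mult.commute)
      ultimately show "\<exists>D. ((\<lambda>s. (F s v - F s w) / norm (v - w)) has_real_derivative D) (at t) \<and> c/4 \<le> \<bar>D\<bar>"
        by (auto intro: less_imp_le)
    qed
  qed
  with \<open>c > 0\<close> show ?thesis
    by (intro exI[of _ "c/4"]) simp
qed

lemma transversal_on_balls:
  assumes "C > 0" "\<forall>\<^sub>F (t, v, w) in nhds (t0, u0, u0). transversal_condition F C t v w \<and> P t v"
  obtains \<delta> where "\<delta> > 0" "\<And>t u. t \<in> ball t0 \<delta> \<Longrightarrow> u \<in> ball u0 \<delta> \<Longrightarrow> P t u"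
    "transversal F (ball t0 \<delta>) (ball u0 \<delta>)"
proof -
  obtain \<delta> where "\<delta> > 0" and \<delta>: "\<And>t v w. t \<in> ball t0 \<delta> \<Longrightarrow> v \<in> ball u0 \<delta> \<Longrightarrow> w \<in> ball u0 \<delta> \<Longrightarrow>
      transversal_condition F C t v w \<and> P t v"
    using eventually_nhds_triple_ball[OF assms(2)] by (metis (no_types, lifting) case_prod_conv)
  then show ?thesis
    using that \<open>C > 0\<close> unfolding transversal_iff_condition by blast
qed

section \<open>Local transversality of \<open>\<Pi>\<close>\<close>

definition chart_frame :: "real^3^3 \<Rightarrow> nat \<Rightarrow> real \<Rightarrow> 2 \<Rightarrow> real^3" where
  "chart_frame A j t i = mexp t A *v chart_dir j i"

lemma gam_chart_inv_diff:
  "gam A t (chart_inv j v) - gam A t (chart_inv j w) = (\<Sum>i\<in>UNIV. (v - w) $ i *\<^sub>R chart_frame A j t i)"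
  using chart_inv_affine[of j v] chart_inv_affine[of j w]
  by (simp add: chart_frame_def gam_def sum_2 matrix_vector_right_distrib matrix_vector_mult_diff_distrib
      matrix_vector_mult_scaleR scaleR_diff_left algebra_simps)

lemma Pi_coord_diff:
  assumes "tchart_den k (gam A t (chart_inv j v)) \<noteq> 0" "tchart_den k (gam A t (chart_inv j w)) \<noteq> 0"
  shows "Pi_coord A j k t v - Pi_coord A j k t w
    = (\<chi> i. pi_slope k (gam A t (chart_inv j w)) (gam A t (chart_inv j v)) (chart_frame A j t i)) \<bullet> (v - w)"
  using tchart_pi_diff[OF assms(2,1)]
  unfolding gam_chart_inv_diff linear_sum_scaleR_eq_inner[OF linear_pi_slope]
  by (simp add: Pi_coord_def)

lemma Pi_coord_has_derivative:
  "tchart_den k (gam A t (chart_inv j u)) \<noteq> 0 \<Longrightarrow>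
    ((\<lambda>s. Pi_coord A j k s u) has_real_derivative pi_velocity k A (gam A t (chart_inv j u))) (at t)"
  unfolding Pi_coord_def by (rule tchart_pi_gam_has_derivative)

lemma pi_velocity_chart_diff:
  assumes "tchart_den k (gam A t (chart_inv j v)) \<noteq> 0" "tchart_den k (gam A t (chart_inv j w)) \<noteq> 0"
  shows "pi_velocity k A (gam A t (chart_inv j v)) - pi_velocity k A (gam A t (chart_inv j w))
    = (\<chi> i. velocity_slope k A (gam A t (chart_inv j w)) (gam A t (chart_inv j v)) (chart_frame A j t i))
      \<bullet> (v - w)"
  using pi_velocity_diff[OF assms(2,1)]
  unfolding gam_chart_inv_diff linear_sum_scaleR_eq_inner[OF linear_velocity_slope] .

lemma chart_slopes_independent:
  assumes "y = gam A t (chart_inv j u)" "tchart_den k y \<noteq> 0" "L0_form A y \<noteq> 0"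
  shows "pi_slope k y y (chart_frame A j t 1) * velocity_slope k A y y (chart_frame A j t 2)
       - pi_slope k y y (chart_frame A j t 2) * velocity_slope k A y y (chart_frame A j t 1) \<noteq> 0"
proof -
  have "det (vector [y, chart_frame A j t 1, chart_frame A j t 2]) \<noteq> 0"
    using det_mexp_nonzero det_chart_frame
    by (simp add: assms(1) chart_frame_def gam_def det_vector_matrix_vector_mult)
  with assms(2,3) show ?thesis
    by (simp add: slope_det)
qed

lemma Pi_coord_transversal_near:
  assumes den0: "tchart_den k (gam A t0 (chart_inv j u0)) \<noteq> 0"
    and L0: "L0_form A (gam A t0 (chart_inv j u0)) \<noteq> 0"
  obtains \<delta> where "\<delta> > 0"
    "\<And>t u. t \<in> ball t0 \<delta> \<Longrightarrow> u \<in> ball u0 \<delta> \<Longrightarrow>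
       tchart_den k (gam A t (chart_inv j u)) \<noteq> 0 \<and> L0_form A (gam A t (chart_inv j u)) \<noteq> 0"
    "transversal (Pi_coord A j k) (ball t0 \<delta>) (ball u0 \<delta>)"
proof -
  define z0 where "z0 = (t0, u0, u0)"
  define Wv where "Wv z = gam A (fst z) (chart_inv j (fst (snd z)))" for z :: "real \<times> (real^2) \<times> (real^2)"
  define Ww where "Ww z = gam A (fst z) (chart_inv j (snd (snd z)))" for z :: "real \<times> (real^2) \<times> (real^2)"
  define g where "g z = (\<chi> i. pi_slope k (Ww z) (Wv z) (chart_frame A j (fst z) i))" for z
  define h where "h z = (\<chi> i. velocity_slope k A (Ww z) (Wv z) (chart_frame A j (fst z) i))" for z
  have cont: "isCont Wv z" "isCont Ww z" "isCont (\<lambda>z. chart_frame A j (fst z) i) z" for z i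
    unfolding Wv_def Ww_def chart_frame_def gam_def[symmetric] by (intro continuous_intros)+
  have base: "Wv z0 = gam A t0 (chart_inv j u0)" "Ww z0 = gam A t0 (chart_inv j u0)"
    by (simp_all add: Wv_def Ww_def z0_def)
  have region: "\<forall>\<^sub>F z in nhds z0.
      tchart_den k (Wv z) \<noteq> 0 \<and> tchart_den k (Ww z) \<noteq> 0 \<and> L0_form A (Wv z) \<noteq> 0"
    using den0 L0
    by (intro eventually_conj eventually_nhds_nonzero continuous_intros cont) (simp_all add: base)
  have "isCont g z0" "isCont h z0"
    using den0 unfolding g_def h_def
    by (intro continuous_intros isCont_pi_slope isCont_velocity_slope cont; simp add: base)+
  moreover have "g z0 $ 1 * h z0 $ 2 - g z0 $ 2 * h z0 $ 1 \<noteq> 0"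
    using chart_slopes_independent[OF refl den0 L0] by (simp add: g_def h_def base) (simp add: z0_def)
  moreover have "\<forall>\<^sub>F (t, v, w) in nhds z0.
      Pi_coord A j k t v - Pi_coord A j k t w = g (t, v, w) \<bullet> (v - w) \<and>
      pi_velocity k A (gam A t (chart_inv j v)) - pi_velocity k A (gam A t (chart_inv j w))
        = h (t, v, w) \<bullet> (v - w) \<and>
      ((\<lambda>s. Pi_coord A j k s v) has_real_derivative pi_velocity k A (gam A t (chart_inv j v))) (at t) \<and>
      ((\<lambda>s. Pi_coord A j k s w) has_real_derivative pi_velocity k A (gam A t (chart_inv j w))) (at t)"
    using region
    by eventually_elim (auto simp: Wv_def Ww_def g_def h_def Pi_coord_diff pi_velocity_chart_diff
        Pi_coord_has_derivative)
  ultimately obtain C where "C > 0"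
    and estimate: "\<forall>\<^sub>F (t, v, w) in nhds z0. transversal_condition (Pi_coord A j k) C t v w"
    using eventually_transversal_condition[where Ft="\<lambda>t u. pi_velocity k A (gam A t (chart_inv j u))"]
    by blast
  have "\<forall>\<^sub>F (t, v, w) in nhds (t0, u0, u0). transversal_condition (Pi_coord A j k) C t v w \<and>
      tchart_den k (gam A t (chart_inv j v)) \<noteq> 0 \<and> L0_form A (gam A t (chart_inv j v)) \<noteq> 0"
    using eventually_conj[OF estimate region] unfolding z0_def by (elim eventually_mono) (auto simp: Wv_def)
  then show ?thesis
    by (rule transversal_on_balls[OF \<open>C > 0\<close>]) (rule that)
qed

lemma exists_charts_at:
  assumes "v0 \<noteq> 0" "L0_form A (gam A t0 v0) \<noteq> 0"
  obtains j k where "j \<in> {1,2,3}" "k \<in> {1,2}" "chart_dom j v0"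
    "tchart_den k (gam A t0 (chart_inv j (chart_coord j v0))) \<noteq> 0"
    "L0_form A (gam A t0 (chart_inv j (chart_coord j v0))) \<noteq> 0"
proof -
  define w where "w = gam A t0 v0"
  obtain j where j: "j \<in> {1,2,3}" "chart_dom j v0"
    using exists_chart[OF assms(1)] by blast
  then obtain c where "c \<noteq> 0" and c: "gam A t0 (chart_inv j (chart_coord j v0)) = c *\<^sub>R w"
    using chart_inv_chart_coord[OF j(2)] by (auto simp: w_def gam_def matrix_vector_mult_scaleR)
  define k :: nat where "k = (if w $ 3 \<noteq> 0 then 1 else 2)"
  have "tchart_den k w \<noteq> 0"
    using assms(2) by (auto simp: k_def tchart_den_def L0_form_def w_def)
  moreover have "L0_form A (c *\<^sub>R w) = c * L0_form A w"
    by (simp add: L0_form_def algebra_simps)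
  ultimately show ?thesis
    using \<open>c \<noteq> 0\<close> assms(2)
    by (intro that[OF j(1) _ j(2)]) (simp_all add: k_def c w_def linear_scale[OF linear_tchart_den])
qed

theorem theorem4p1:
  fixes A :: "real^3^3"
  assumes "A \<noteq> 0"
  shows "(\<forall>t v. v \<noteq> 0 \<and> (t, v) \<notin> setS A \<longrightarrow>
            (gam A t v)$1 \<noteq> 0 \<or> (gam A t v)$3 \<noteq> 0)
         \<and> Pi_locally_transversal A"
proof
  show "\<forall>t v. v \<noteq> 0 \<and> (t, v) \<notin> setS A \<longrightarrow> gam A t v $ 1 \<noteq> 0 \<or> gam A t v $ 3 \<noteq> 0"
    using setS_iff by blast
  show "Pi_locally_transversal A"
    unfolding Pi_locally_transversal_def
  proof (intro allI impI)
    fix t0 v0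
    assume "v0 \<noteq> 0 \<and> (t0, v0) \<notin> setK A"
    then obtain j k where jk: "j \<in> {1,2,3}" "k \<in> {1,2}" "chart_dom j v0"
      "tchart_den k (gam A t0 (chart_inv j (chart_coord j v0))) \<noteq> 0"
      "L0_form A (gam A t0 (chart_inv j (chart_coord j v0))) \<noteq> 0"
      using exists_charts_at[of v0 A t0] setK_iff[of v0 t0 A] by blast
    obtain \<delta> where "\<delta> > 0" and region: "\<And>t u. t \<in> ball t0 \<delta> \<Longrightarrow> u \<in> ball (chart_coord j v0) \<delta> \<Longrightarrow>
        tchart_den k (gam A t (chart_inv j u)) \<noteq> 0 \<and> L0_form A (gam A t (chart_inv j u)) \<noteq> 0"
      and "transversal (Pi_coord A j k) (ball t0 \<delta>) (ball (chart_coord j v0) \<delta>)"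
      using Pi_coord_transversal_near[OF jk(4,5)] by blast
    then show "\<exists>Lam Om j k. j \<in> {1,2,3} \<and> k \<in> {1,2} \<and> open Lam \<and> t0 \<in> Lam \<and> open Om \<and>
        chart_dom j v0 \<and> chart_coord j v0 \<in> Om \<and>
        (\<forall>t\<in>Lam. \<forall>u\<in>Om. (t, chart_inv j u) \<notin> setK A \<and> tchart_dom k (gam A t (chart_inv j u))) \<and>
        transversal (Pi_coord A j k) Lam Om"
      using jk(1-3) region by (intro exI[of _ "ball t0 \<delta>"] exI[of _ "ball (chart_coord j v0) \<delta>"] exI[of _ j]
          exI[of _ k]) (simp add: setK_iff chart_inv_nonzero tchart_dom_iff)
  qed
qed

end
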